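(* (i) For $n\ge 3$, $\chi_{dom}(T_n)=n+1$. (ii) For $n\ge 2$, $\chi_{dom}(O_n)=\chi_{dom}(Q_n)=n+1$.
   Context: A dominated coloring of a graph is a proper coloring in which every color class is dominated by at least one vertex, i.e. for each color class $C$ there is a vertex adjacent to every vertex of $C$; $\chi_{dom}$ denotes the minimum number of colors in a dominated coloring. A cactus is a connected graph in which every block is an edge or a cycle. A chain triangular cactus of length $n$, $T_n$, is a cactus whose $n$ blocks are all triangles, each triangle has at most two cut-vertices, and each cut-vertex is shared by exactly two triangles (all such graphs of length $n$ are isomorphic). A square cactus chain of length $n$ is defined in the same way with every block a $4$-cycle; an internal square is an ortho-square if its two cut-vertices are adjacent and a para-square if they are not adjacent. $Q_n$ is the para-chain of length $n$ (all internal squares are para-squares) and $O_n$ is the ortho-chain of length $n$ (all internal squares are ortho-squares). *)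

theory Defs
  imports Main
begin

definition adj :: "(nat \<times> nat) set \<Rightarrow> nat \<Rightarrow> nat \<Rightarrow> bool" where
  "adj E u v \<longleftrightarrow> (u, v) \<in> E \<or> (v, u) \<in> E"

definition dominated_coloring ::
  "nat set \<Rightarrow> (nat \<times> nat) set \<Rightarrow> (nat \<Rightarrow> nat) \<Rightarrow> nat \<Rightarrow> bool" where
  "dominated_coloring V E c k \<longleftrightarrow>
     (\<forall>v\<in>V. c v < k) \<and>
     (\<forall>u\<in>V. \<forall>v\<in>V. adj E u v \<longrightarrow> c u \<noteq> c v) \<and>
     (\<forall>i<k. {v\<in>V. c v = i} \<noteq> {} \<longrightarrow> (\<exists>w\<in>V. \<forall>v\<in>V. c v = i \<longrightarrow> adj E w v))"

definition chi_dom :: "nat set \<Rightarrow> (nat \<times> nat) set \<Rightarrow> nat" where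
  "chi_dom V E = (LEAST k. \<exists>c. dominated_coloring V E c k)"

text \<open>Chain triangular cactus T_n: triangles {2i, 2i+1, 2i+2}, i < n;
  cut vertices 2, 4, ..., 2(n-1).\<close>

definition T_V :: "nat \<Rightarrow> nat set" where "T_V n = {..2*n}"
definition T_E :: "nat \<Rightarrow> (nat \<times> nat) set" where
  "T_E n = (\<Union>i<n. {(2*i, 2*i+1), (2*i+1, 2*i+2), (2*i, 2*i+2)})"

text \<open>Square chains: squares on {3i, 3i+1, 3i+2, 3i+3}, i < n; cut vertices 3, 6, ..., 3(n-1).
  Para-chain Q_n: 4-cycle 3i - 3i+1 - 3i+3 - 3i+2 - 3i (cut vertices 3i, 3i+3 non-adjacent).
  Ortho-chain O_n: 4-cycle 3i - 3i+3 - 3i+1 - 3i+2 - 3i (cut vertices 3i, 3i+3 adjacent).\<close>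

definition S_V :: "nat \<Rightarrow> nat set" where "S_V n = {..3*n}"
definition Q_E :: "nat \<Rightarrow> (nat \<times> nat) set" where
  "Q_E n = (\<Union>i<n. {(3*i, 3*i+1), (3*i+1, 3*i+3), (3*i+3, 3*i+2), (3*i+2, 3*i)})"
definition O_E :: "nat \<Rightarrow> (nat \<times> nat) set" where
  "O_E n = (\<Union>i<n. {(3*i, 3*i+3), (3*i+3, 3*i+1), (3*i+1, 3*i+2), (3*i+2, 3*i)})"

end

theory Submission
  imports Defs
begin

text \<open>
  Every colour class of a dominated colouring is an independent set inside the neighbourhood of
  its dominating vertex. So if a weighting of the vertices gives every such set weight at most b,
  a dominated colouring with k colours has total weight at most k * b, and k > n as soon as the
  total weight exceeds n * b.

  \<^item> T_n: every vertex weighs 1 and b = 2, since the neighbours of a vertex below it lie in one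
    triangle, and so do those above it; the total weight is 2n + 1.
  \<^item> Q_n: cut vertices weigh 2 and the others 1. A cut vertex has at most four neighbours, none of
    them a cut vertex, and any other vertex has exactly two neighbours, both cut vertices; so
    b = 4 against a total weight of 4n + 2.
  \<^item> O_n: cut vertices weigh 0, vertex 2 weighs 2 and the others 1. Every vertex has at most two
    non-cut neighbours, and the neighbours 0 and 1 of vertex 2 have no other one; so b = 2
    against a total weight of 2n + 1.

  The matching upper bounds are explicit colourings with n + 1 colours, each colour class given
  together with a vertex dominating it.
\<close>

lemma dominated_coloringI:
  assumes "\<And>v. v \<in> V \<Longrightarrow> c v < k"
    and "\<And>u v. u \<in> V \<Longrightarrow> v \<in> V \<Longrightarrow> adj E u v \<Longrightarrow> c u \<noteq> c v"
    and "\<And>v. v \<in> V \<Longrightarrow> d (c v) \<in> V \<and> adj E (d (c v)) v"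
  shows "dominated_coloring V E c k"
  unfolding dominated_coloring_def
proof (intro conjI allI impI ballI)
  fix i assume "{v \<in> V. c v = i} \<noteq> {}"
  then obtain v where "v \<in> V" "c v = i" by blast
  then show "\<exists>w\<in>V. \<forall>v\<in>V. c v = i \<longrightarrow> adj E w v" using assms(3) by metis
qed (use assms in auto)

lemma dominated_coloring_weight_le:
  fixes f :: "nat \<Rightarrow> nat"
  assumes col: "dominated_coloring V E c k" and "finite V"
    and bound: "\<And>w S. w \<in> V \<Longrightarrow> S \<subseteq> {v \<in> V. adj E w v} \<Longrightarrow>
      \<forall>u\<in>S. \<forall>v\<in>S. \<not> adj E u v \<Longrightarrow> sum f S \<le> b"
  shows "sum f V \<le> k * b"
proof -
  have "sum f V = (\<Sum>i<k. sum f {v \<in> V. c v = i})"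
    using col \<open>finite V\<close> by (intro sum.group[symmetric]) (auto simp: dominated_coloring_def)
  also have "\<dots> \<le> (\<Sum>i<k. b)"
  proof (rule sum_mono)
    fix i assume "i \<in> {..<k}"
    show "sum f {v \<in> V. c v = i} \<le> b"
    proof (cases "{v \<in> V. c v = i} = {}")
      case False
      then obtain w where "w \<in> V" "\<forall>v\<in>V. c v = i \<longrightarrow> adj E w v"
        using col \<open>i \<in> {..<k}\<close> unfolding dominated_coloring_def by auto
      moreover have "\<forall>u\<in>{v \<in> V. c v = i}. \<forall>v\<in>{v \<in> V. c v = i}. \<not> adj E u v"
        using col unfolding dominated_coloring_def by fastforce
      ultimately show ?thesis by (intro bound) auto
    qed (simp only: sum.empty)
  qed
  finally show ?thesis by simp
qed

lemma chi_dom_eqI: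
  fixes f :: "nat \<Rightarrow> nat"
  assumes "dominated_coloring V E c (n + 1)" and "finite V" and "n * b < sum f V"
    and "\<And>w S. w \<in> V \<Longrightarrow> S \<subseteq> {v \<in> V. adj E w v} \<Longrightarrow>
      \<forall>u\<in>S. \<forall>v\<in>S. \<not> adj E u v \<Longrightarrow> sum f S \<le> b"
  shows "chi_dom V E = n + 1"
  unfolding chi_dom_def
proof (rule Least_equality)
  show "\<exists>c. dominated_coloring V E c (n + 1)" using assms(1) by blast
next
  fix k assume "\<exists>c. dominated_coloring V E c k"
  then obtain c' where "dominated_coloring V E c' k" by blast
  then have "sum f V \<le> k * b" using assms(2,4) by (rule dominated_coloring_weight_le)
  then have "n * b < k * b" using assms(3) by linarith
  then show "n + 1 \<le> k" by simp
qed

lemma card_le_2_if_two_cliques: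
  assumes "finite S" and "S \<subseteq> K1 \<union> K2" and "\<forall>u\<in>S. \<forall>v\<in>S. \<not> R u v"
    and "\<forall>x\<in>K1. \<forall>y\<in>K1. x \<noteq> y \<longrightarrow> R x y" and "\<forall>x\<in>K2. \<forall>y\<in>K2. x \<noteq> y \<longrightarrow> R x y"
  shows "card S \<le> 2"
proof -
  have clique_part: "card (S \<inter> K) \<le> 1" if "\<forall>x\<in>K. \<forall>y\<in>K. x \<noteq> y \<longrightarrow> R x y" for K
  proof -
    have "\<forall>x\<in>S \<inter> K. \<forall>y\<in>S \<inter> K. x = y" using assms(3) that by blast
    then show ?thesis using assms(1) by (simp add: card_le_Suc0_iff_eq)
  qed
  have "card (S \<inter> K1) \<le> 1" "card (S \<inter> K2) \<le> 1" using clique_part assms(4,5) by auto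
  moreover have "S = (S \<inter> K1) \<union> (S \<inter> K2)" using assms(2) by blast
  ultimately show ?thesis using card_Un_le[of "S \<inter> K1" "S \<inter> K2"] by simp
qed

lemma sum_set_le_sum_list: "sum f (set xs) \<le> sum_list (map f xs)" for f :: "'a \<Rightarrow> nat"
  by (induction xs) (auto simp: sum.insert_if)

lemma mod_3_cases:
  fixes v :: nat
  obtains (0) i where "v = 3 * i" | (1) i where "v = 3 * i + 1" | (2) i where "v = 3 * i + 2"
proof -
  have v: "v = 3 * (v div 3) + v mod 3" by simp
  consider "v mod 3 = 0" | "v mod 3 = 1" | "v mod 3 = 2" by linarith
  then show thesis using v that by cases auto
qed

lemma sum_atMost_3_Suc:
  "sum f {..3 * Suc n} = sum f {..3 * n} + f (3 * n + 1) + f (3 * n + 2) + f (3 * n + 3)"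
proof -
  have "3 * Suc n = Suc (Suc (Suc (3 * n)))" by simp
  then show ?thesis by (simp only: sum.atMost_Suc) (simp add: Suc3_eq_add_3 add.commute)
qed

definition T_arc :: "nat \<Rightarrow> nat \<Rightarrow> bool" where
  "T_arc a b \<longleftrightarrow> b = a + 1 \<or> (even a \<and> b = a + 2)"

lemma mem_T_E_iff: "(a, b) \<in> T_E n \<longleftrightarrow> b \<le> 2 * n \<and> T_arc a b"
proof
  assume "(a, b) \<in> T_E n"
  then show "b \<le> 2 * n \<and> T_arc a b" unfolding T_E_def T_arc_def by auto
next
  assume ab: "b \<le> 2 * n \<and> T_arc a b"
  define i where "i = a div 2"
  have "a = 2 * i \<or> a = 2 * i + 1" unfolding i_def by linarith
  then have "i < n" and "(a, b) \<in> {(2*i, 2*i+1), (2*i+1, 2*i+2), (2*i, 2*i+2)}"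
    using ab unfolding T_arc_def by auto
  then show "(a, b) \<in> T_E n" unfolding T_E_def by blast
qed

lemma adj_T_E: "adj (T_E n) u v \<longleftrightarrow> u \<le> 2 * n \<and> v \<le> 2 * n \<and> (T_arc u v \<or> T_arc v u)"
  unfolding adj_def mem_T_E_iff T_arc_def by auto

lemma T_E_lower_neighbours_adj:
  "adj (T_E n) w x \<Longrightarrow> adj (T_E n) w y \<Longrightarrow> x < w \<Longrightarrow> y < w \<Longrightarrow> x \<noteq> y \<Longrightarrow> adj (T_E n) x y"
  unfolding adj_T_E T_arc_def by auto

lemma T_E_upper_neighbours_adj:
  "adj (T_E n) w x \<Longrightarrow> adj (T_E n) w y \<Longrightarrow> w < x \<Longrightarrow> w < y \<Longrightarrow> x \<noteq> y \<Longrightarrow> adj (T_E n) x y"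
  unfolding adj_T_E T_arc_def by auto

lemma card_independent_nbhd_T_E_le:
  assumes "finite S" and nbhd: "S \<subseteq> {v. adj (T_E n) w v}"
    and indep: "\<forall>u\<in>S. \<forall>v\<in>S. \<not> adj (T_E n) u v"
  shows "card S \<le> 2"
proof (rule card_le_2_if_two_cliques[OF \<open>finite S\<close> _ indep])
  show "S \<subseteq> {x. adj (T_E n) w x \<and> x < w} \<union> {x. adj (T_E n) w x \<and> w < x}"
  proof
    fix x assume "x \<in> S"
    then have "adj (T_E n) w x" "x \<noteq> w" using nbhd indep by auto
    then show "x \<in> {x. adj (T_E n) w x \<and> x < w} \<union> {x. adj (T_E n) w x \<and> w < x}"
      by (auto simp: nat_neq_iff)
  qed
  show "\<forall>x\<in>{x. adj (T_E n) w x \<and> x < w}. \<forall>y\<in>{x. adj (T_E n) w x \<and> x < w}. x \<noteq> y \<longrightarrow> adj (T_E n) x y"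
    using T_E_lower_neighbours_adj by blast
  show "\<forall>x\<in>{x. adj (T_E n) w x \<and> w < x}. \<forall>y\<in>{x. adj (T_E n) w x \<and> w < x}. x \<noteq> y \<longrightarrow> adj (T_E n) x y"
    using T_E_upper_neighbours_adj by blast
qed

text \<open>Colour j \<ge> 3 is the class {2j - 1, 2j + 2}, dominated by 2j; the remaining classes
  {0, 3}, {1, 4} and {2, 6} are dominated by 2, 2 and 4.\<close>

definition T_coloring :: "nat \<Rightarrow> nat" where
  "T_coloring v = (if v < 4 then [0, 1, 2, 0] ! v else if even v then v div 2 - 1 else v div 2 + 1)"

definition T_dominator :: "nat \<Rightarrow> nat" where
  "T_dominator i = 2 * max 1 i"

lemma T_coloring_proper:
  assumes "T_arc u v"
  shows "T_coloring u \<noteq> T_coloring v"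
proof (cases "u < 4")
  case True
  then consider "u = 0" | "u = 1" | "u = 2" | "u = 3" by linarith
  then show ?thesis using assms by cases (auto simp: T_arc_def T_coloring_def)
next
  case False
  then show ?thesis using assms unfolding T_arc_def T_coloring_def by (auto elim!: evenE)
qed

lemma T_coloring_le: "2 \<le> n \<Longrightarrow> v \<le> 2 * n \<Longrightarrow> T_coloring v \<le> n"
  unfolding T_coloring_def by (auto simp: nth_Cons'; presburger)

lemma T_dominator_arc: "T_arc (T_dominator (T_coloring v)) v \<or> T_arc v (T_dominator (T_coloring v))"
proof (cases "v < 4")
  case True
  then consider "v = 0" | "v = 1" | "v = 2" | "v = 3" by linarith
  then show ?thesis by cases (auto simp: T_coloring_def T_dominator_def T_arc_def)
next
  case False
  then show ?thesis unfolding T_arc_def T_coloring_def T_dominator_def by auto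
qed

lemma dominated_coloring_T:
  assumes "2 \<le> n"
  shows "dominated_coloring (T_V n) (T_E n) T_coloring (n + 1)"
proof (rule dominated_coloringI)
  fix v assume "v \<in> T_V n"
  then have v: "v \<le> 2 * n" by (simp add: T_V_def)
  then show "T_coloring v < n + 1" using T_coloring_le assms by fastforce
  have "T_dominator (T_coloring v) \<le> 2 * n"
    using T_coloring_le[OF assms v] assms by (simp add: T_dominator_def)
  then show "T_dominator (T_coloring v) \<in> T_V n \<and> adj (T_E n) (T_dominator (T_coloring v)) v"
    using v T_dominator_arc by (simp add: T_V_def adj_T_E)
next
  fix u v assume "adj (T_E n) u v"
  then show "T_coloring u \<noteq> T_coloring v" using T_coloring_proper unfolding adj_T_E by metis
qed

lemma chi_dom_T:
  assumes "2 \<le> n"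
  shows "chi_dom (T_V n) (T_E n) = n + 1"
proof (rule chi_dom_eqI[where f = "\<lambda>_. 1" and b = 2])
  show "dominated_coloring (T_V n) (T_E n) T_coloring (n + 1)" using assms by (rule dominated_coloring_T)
  show "finite (T_V n)" "n * 2 < (\<Sum>v\<in>T_V n. 1)" by (simp_all add: T_V_def)
  fix w S assume "S \<subseteq> {v \<in> T_V n. adj (T_E n) w v}" "\<forall>u\<in>S. \<forall>v\<in>S. \<not> adj (T_E n) u v"
  then have "card S \<le> 2"
    by (intro card_independent_nbhd_T_E_le) (auto simp: T_V_def intro: finite_subset)
  then show "(\<Sum>v\<in>S. 1::nat) \<le> 2" by simp
qed

definition O_arc :: "nat \<Rightarrow> nat \<Rightarrow> bool" where
  "O_arc a b \<longleftrightarrow> (a mod 3 = 0 \<and> (b = a + 2 \<or> b = a + 3)) \<or> (a mod 3 = 1 \<and> (b = a + 1 \<or> b = a + 2))"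

lemma adj_O_E: "adj (O_E n) u v \<longleftrightarrow> u \<le> 3 * n \<and> v \<le> 3 * n \<and> (O_arc u v \<or> O_arc v u)"
proof -
  define square :: "nat \<Rightarrow> (nat \<times> nat) set" where
    "square i = {(3*i, 3*i+3), (3*i+3, 3*i+1), (3*i+1, 3*i+2), (3*i+2, 3*i)}" for i
  have arc_square: "\<exists>i<n. (a, b) \<in> square i \<or> (b, a) \<in> square i" if "O_arc a b" "b \<le> 3 * n" for a b
  proof (cases a rule: mod_3_cases)
    case (0 i)
    then have "i < n \<and> ((a, b) \<in> square i \<or> (b, a) \<in> square i)"
      using that by (auto simp: O_arc_def square_def)
    then show ?thesis by blast
  next
    case (1 i)
    then have "i < n \<and> ((a, b) \<in> square i \<or> (b, a) \<in> square i)"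
      using that by (auto simp: O_arc_def square_def)
    then show ?thesis by blast
  next
    case (2 i)
    then show ?thesis using that by (simp add: O_arc_def mod_Suc)
  qed
  have square_arc: "u \<le> 3 * n \<and> v \<le> 3 * n \<and> (O_arc u v \<or> O_arc v u)"
    if "i < n" "(u, v) \<in> square i \<or> (v, u) \<in> square i" for i
    using that unfolding square_def O_arc_def by (elim disjE insertE; simp)
  have "O_E n = (\<Union>i<n. square i)" unfolding O_E_def square_def ..
  then have "adj (O_E n) u v \<longleftrightarrow> (\<exists>i<n. (u, v) \<in> square i \<or> (v, u) \<in> square i)"
    unfolding adj_def by blast
  also have "\<dots> \<longleftrightarrow> u \<le> 3 * n \<and> v \<le> 3 * n \<and> (O_arc u v \<or> O_arc v u)"
  proof
    assume "\<exists>i<n. (u, v) \<in> square i \<or> (v, u) \<in> square i"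
    then show "u \<le> 3 * n \<and> v \<le> 3 * n \<and> (O_arc u v \<or> O_arc v u)" using square_arc by blast
  next
    assume "u \<le> 3 * n \<and> v \<le> 3 * n \<and> (O_arc u v \<or> O_arc v u)"
    then show "\<exists>i<n. (u, v) \<in> square i \<or> (v, u) \<in> square i"
      using arc_square[of u v] arc_square[of v u] by blast
  qed
  finally show ?thesis .
qed

definition O_weight :: "nat \<Rightarrow> nat" where
  "O_weight v = (if v mod 3 = 0 then 0 else if v = 2 then 2 else 1)"

lemma sum_O_weight: "1 \<le> n \<Longrightarrow> sum O_weight (S_V n) = 2 * n + 1"
proof (induction n rule: nat_induct_at_least)
  case base
  show ?case using sum_atMost_3_Suc[of O_weight 0] by (simp add: S_V_def O_weight_def)
next
  case (Suc n)
  then show ?case using sum_atMost_3_Suc[of O_weight n] by (simp add: S_V_def O_weight_def mod_Suc)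
qed

lemma O_nbhd_weight_le: "sum O_weight {v \<in> S_V n. adj (O_E n) w v} \<le> 2"
proof -
  obtain xs where nbhd: "{v \<in> S_V n. adj (O_E n) w v} \<subseteq> set xs"
    and weight: "sum_list (map O_weight xs) \<le> 2"
  proof (cases w rule: mod_3_cases)
    case (0 i)
    show thesis
    proof (cases i)
      case 0
      have "{v \<in> S_V n. adj (O_E n) w v} \<subseteq> set [2, 3]"
        using \<open>w = 3 * i\<close> 0 by (auto simp: adj_O_E O_arc_def)
      then show thesis by (rule that) (simp add: O_weight_def)
    next
      case (Suc j)
      have "{v \<in> S_V n. adj (O_E n) w v} \<subseteq> set [3 * j, 3 * j + 1, 3 * j + 5, 3 * j + 6]"
        using \<open>w = 3 * i\<close> Suc by (auto simp: adj_O_E O_arc_def mod_Suc)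
      then show thesis by (rule that) (simp add: O_weight_def)
    qed
  next
    case (1 i)
    have "{v \<in> S_V n. adj (O_E n) w v} \<subseteq> set [3 * i + 2, 3 * i + 3]"
      using 1 by (auto simp: adj_O_E O_arc_def mod_Suc; presburger)
    then show thesis by (rule that) (simp add: O_weight_def)
  next
    case (2 i)
    have "{v \<in> S_V n. adj (O_E n) w v} \<subseteq> set [3 * i, 3 * i + 1]"
      using 2 by (auto simp: adj_O_E O_arc_def mod_Suc; presburger)
    then show thesis by (rule that) (simp add: O_weight_def)
  qed
  have "sum O_weight {v \<in> S_V n. adj (O_E n) w v} \<le> sum O_weight (set xs)"
    using nbhd by (intro sum_mono2) auto
  also have "\<dots> \<le> 2" using sum_set_le_sum_list[of O_weight xs] weight by linarith
  finally show ?thesis .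
qed

text \<open>Colour i \<ge> 1 is the class {3i - 2, 3i + 2, 3i + 3} (together with 0 for i = 1), dominated
  by the cut vertex 3i; colour 0 is the class {2, 3}, dominated by 1.\<close>

definition O_coloring :: "nat \<Rightarrow> nat" where
  "O_coloring v = (if v = 0 then 1 else if v mod 3 = 0 then v div 3 - 1
     else if v mod 3 = 1 then v div 3 + 1 else v div 3)"

definition O_dominator :: "nat \<Rightarrow> nat" where
  "O_dominator i = (if i = 0 then 1 else 3 * i)"

lemma O_coloring_proper: "O_arc u v \<Longrightarrow> O_coloring u \<noteq> O_coloring v"
  by (cases u rule: mod_3_cases; simp add: O_arc_def; elim disjE; auto simp: O_coloring_def mod_Suc div_Suc)

lemma O_coloring_le: "1 \<le> n \<Longrightarrow> v \<le> 3 * n \<Longrightarrow> O_coloring v \<le> n"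
  by (cases v rule: mod_3_cases) (auto simp: O_coloring_def mod_Suc div_Suc)

lemma O_dominator_arc: "O_arc (O_dominator (O_coloring v)) v \<or> O_arc v (O_dominator (O_coloring v))"
  by (cases v rule: mod_3_cases) (auto simp: O_arc_def O_coloring_def O_dominator_def mod_Suc div_Suc)

lemma dominated_coloring_O:
  assumes "1 \<le> n"
  shows "dominated_coloring (S_V n) (O_E n) O_coloring (n + 1)"
proof (rule dominated_coloringI)
  fix v assume "v \<in> S_V n"
  then have v: "v \<le> 3 * n" by (simp add: S_V_def)
  then show "O_coloring v < n + 1" using O_coloring_le assms by fastforce
  have "O_dominator (O_coloring v) \<le> 3 * n"
    using O_coloring_le[OF assms v] assms by (simp add: O_dominator_def)
  then show "O_dominator (O_coloring v) \<in> S_V n \<and> adj (O_E n) (O_dominator (O_coloring v)) v"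
    using v O_dominator_arc by (simp add: S_V_def adj_O_E)
next
  fix u v assume "adj (O_E n) u v"
  then show "O_coloring u \<noteq> O_coloring v" using O_coloring_proper unfolding adj_O_E by metis
qed

lemma chi_dom_O:
  assumes "1 \<le> n"
  shows "chi_dom (S_V n) (O_E n) = n + 1"
proof (rule chi_dom_eqI[where f = O_weight and b = 2])
  show "dominated_coloring (S_V n) (O_E n) O_coloring (n + 1)" using assms by (rule dominated_coloring_O)
  show "finite (S_V n)" by (simp add: S_V_def)
  show "n * 2 < sum O_weight (S_V n)" using sum_O_weight[OF assms] by simp
  fix w S assume "S \<subseteq> {v \<in> S_V n. adj (O_E n) w v}"
  then have "sum O_weight S \<le> sum O_weight {v \<in> S_V n. adj (O_E n) w v}"
    by (intro sum_mono2) (auto simp: S_V_def)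
  then show "sum O_weight S \<le> 2" using O_nbhd_weight_le order_trans by blast
qed

definition Q_arc :: "nat \<Rightarrow> nat \<Rightarrow> bool" where
  "Q_arc a b \<longleftrightarrow> (a mod 3 = 0 \<and> (b = a + 1 \<or> b = a + 2)) \<or> (a mod 3 = 1 \<and> b = a + 2) \<or> (a mod 3 = 2 \<and> b = a + 1)"

lemma adj_Q_E: "adj (Q_E n) u v \<longleftrightarrow> u \<le> 3 * n \<and> v \<le> 3 * n \<and> (Q_arc u v \<or> Q_arc v u)"
proof -
  define square :: "nat \<Rightarrow> (nat \<times> nat) set" where
    "square i = {(3*i, 3*i+1), (3*i+1, 3*i+3), (3*i+3, 3*i+2), (3*i+2, 3*i)}" for i
  have arc_square: "\<exists>i<n. (a, b) \<in> square i \<or> (b, a) \<in> square i" if "Q_arc a b" "b \<le> 3 * n" for a b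
  proof (cases a rule: mod_3_cases)
    case (0 i)
    then have "i < n \<and> ((a, b) \<in> square i \<or> (b, a) \<in> square i)"
      using that by (auto simp: Q_arc_def square_def mod_Suc)
    then show ?thesis by blast
  next
    case (1 i)
    then have "i < n \<and> ((a, b) \<in> square i \<or> (b, a) \<in> square i)"
      using that by (auto simp: Q_arc_def square_def mod_Suc)
    then show ?thesis by blast
  next
    case (2 i)
    then have "i < n \<and> ((a, b) \<in> square i \<or> (b, a) \<in> square i)"
      using that by (auto simp: Q_arc_def square_def mod_Suc)
    then show ?thesis by blast
  qed
  have square_arc: "u \<le> 3 * n \<and> v \<le> 3 * n \<and> (Q_arc u v \<or> Q_arc v u)"
    if "i < n" "(u, v) \<in> square i \<or> (v, u) \<in> square i" for i
    using that unfolding square_def Q_arc_def by (elim disjE insertE; simp add: mod_Suc)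
  have "Q_E n = (\<Union>i<n. square i)" unfolding Q_E_def square_def ..
  then have "adj (Q_E n) u v \<longleftrightarrow> (\<exists>i<n. (u, v) \<in> square i \<or> (v, u) \<in> square i)"
    unfolding adj_def by blast
  also have "\<dots> \<longleftrightarrow> u \<le> 3 * n \<and> v \<le> 3 * n \<and> (Q_arc u v \<or> Q_arc v u)"
  proof
    assume "\<exists>i<n. (u, v) \<in> square i \<or> (v, u) \<in> square i"
    then show "u \<le> 3 * n \<and> v \<le> 3 * n \<and> (Q_arc u v \<or> Q_arc v u)" using square_arc by blast
  next
    assume "u \<le> 3 * n \<and> v \<le> 3 * n \<and> (Q_arc u v \<or> Q_arc v u)"
    then show "\<exists>i<n. (u, v) \<in> square i \<or> (v, u) \<in> square i"
      using arc_square[of u v] arc_square[of v u] by blast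
  qed
  finally show ?thesis .
qed

definition Q_weight :: "nat \<Rightarrow> nat" where
  "Q_weight v = (if v mod 3 = 0 then 2 else 1)"

lemma sum_Q_weight: "sum Q_weight (S_V n) = 4 * n + 2"
proof (induction n)
  case 0
  show ?case by (simp add: S_V_def Q_weight_def)
next
  case (Suc n)
  then show ?case using sum_atMost_3_Suc[of Q_weight n] by (simp add: S_V_def Q_weight_def mod_Suc)
qed

lemma Q_nbhd_weight_le: "sum Q_weight {v \<in> S_V n. adj (Q_E n) w v} \<le> 4"
proof -
  obtain xs where nbhd: "{v \<in> S_V n. adj (Q_E n) w v} \<subseteq> set xs"
    and weight: "sum_list (map Q_weight xs) \<le> 4"
  proof (cases w rule: mod_3_cases)
    case (0 i)
    show thesis
    proof (cases i)
      case 0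
      have "{v \<in> S_V n. adj (Q_E n) w v} \<subseteq> set [1, 2]"
        using \<open>w = 3 * i\<close> 0 by (auto simp: adj_Q_E Q_arc_def)
      then show thesis by (rule that) (simp add: Q_weight_def mod_Suc)
    next
      case (Suc j)
      have "{v \<in> S_V n. adj (Q_E n) w v} \<subseteq> set [3 * j + 1, 3 * j + 2, 3 * j + 4, 3 * j + 5]"
        using \<open>w = 3 * i\<close> Suc by (auto simp: adj_Q_E Q_arc_def mod_Suc; presburger)
      then show thesis by (rule that) (simp add: Q_weight_def mod_Suc)
    qed
  next
    case (1 i)
    have "{v \<in> S_V n. adj (Q_E n) w v} \<subseteq> set [3 * i, 3 * i + 3]"
      using 1 by (auto simp: adj_Q_E Q_arc_def mod_Suc; presburger)
    then show thesis by (rule that) (simp add: Q_weight_def mod_Suc)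
  next
    case (2 i)
    have "{v \<in> S_V n. adj (Q_E n) w v} \<subseteq> set [3 * i, 3 * i + 3]"
      using 2 by (auto simp: adj_Q_E Q_arc_def mod_Suc; presburger)
    then show thesis by (rule that) (simp add: Q_weight_def mod_Suc)
  qed
  have "sum Q_weight {v \<in> S_V n. adj (Q_E n) w v} \<le> sum Q_weight (set xs)"
    using nbhd by (intro sum_mono2) auto
  also have "\<dots> \<le> 4" using sum_set_le_sum_list[of Q_weight xs] weight by linarith
  finally show ?thesis .
qed

text \<open>Colour 2q is the pair of cut vertices {6q, 6q + 3}, dominated by 6q + 1, or by 3n - 1 if
  6q = 3n is the last vertex; colour 2q + 1 consists of the four neighbours of 6q + 3.\<close>

definition Q_coloring :: "nat \<Rightarrow> nat" where
  "Q_coloring v = (if v mod 3 = 0 then 2 * (v div 6) else 2 * (v div 6) + 1)"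

definition Q_dominator :: "nat \<Rightarrow> nat \<Rightarrow> nat" where
  "Q_dominator n i = (if odd i then 3 * i else if i < n then 3 * i + 1 else 3 * i - 1)"

lemma Q_arc_mod_3: "Q_arc u v \<Longrightarrow> u mod 3 = 0 \<longleftrightarrow> v mod 3 \<noteq> 0"
  by (cases u rule: mod_3_cases) (auto simp: Q_arc_def mod_Suc)

lemma even_Q_coloring_iff: "even (Q_coloring v) \<longleftrightarrow> v mod 3 = 0"
  by (simp add: Q_coloring_def)

lemma Q_coloring_proper: "Q_arc u v \<Longrightarrow> Q_coloring u \<noteq> Q_coloring v"
  using Q_arc_mod_3 even_Q_coloring_iff by metis

lemma Q_coloring_6_mult_add:
  assumes "c < 6"
  shows "Q_coloring (6 * q + c) = (if c = 0 \<or> c = 3 then 2 * q else 2 * q + 1)"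
proof -
  have "(6 * q + c) div 6 = q" using assms by simp
  moreover have "(6 * q + c) mod 3 = c mod 3" by (simp add: mod_add_left_eq[symmetric])
  ultimately show ?thesis using assms unfolding Q_coloring_def by auto
qed

lemma Q_coloring_le:
  assumes "v \<le> 3 * n"
  shows "Q_coloring v \<le> n"
proof -
  define q c where "q = v div 6" and "c = v mod 6"
  have v: "v = 6 * q + c" and "c < 6" unfolding q_def c_def by simp_all
  show ?thesis
  proof (cases "c = 0 \<or> c = 3")
    case True
    then show ?thesis using Q_coloring_6_mult_add[OF \<open>c < 6\<close>] assms v by simp
  next
    case False
    then have "2 * q < n" using assms v by linarith
    then show ?thesis using Q_coloring_6_mult_add[OF \<open>c < 6\<close>] False v by simp
  qed
qed

lemma Q_dominator_arc:
  assumes "1 \<le> n" and "v \<le> 3 * n"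
  shows "Q_dominator n (Q_coloring v) \<le> 3 * n \<and>
    (Q_arc (Q_dominator n (Q_coloring v)) v \<or> Q_arc v (Q_dominator n (Q_coloring v)))"
proof -
  define q c where "q = v div 6" and "c = v mod 6"
  have v: "v = 6 * q + c" and "c < 6" unfolding q_def c_def by simp_all
  have mod3: "(6 * x + k) mod 3 = k mod 3" for x k :: nat by (simp add: mod_add_left_eq[symmetric])
  have col: "Q_coloring v = (if c = 0 \<or> c = 3 then 2 * q else 2 * q + 1)"
    unfolding v using \<open>c < 6\<close> by (rule Q_coloring_6_mult_add)
  consider "c = 0" "2 * q < n" | "c = 0" "n = 2 * q" | "c = 3" "2 * q < n" | "c \<in> {1, 2, 4, 5}" "2 * q < n"
    using \<open>c < 6\<close> assms v by fastforce
  then show ?thesis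
  proof cases
    case 2
    then obtain p where p: "q = Suc p" using assms by (cases q) auto
    have "Q_dominator n (Q_coloring v) = 6 * p + 5" using 2 col p by (simp add: Q_dominator_def)
    moreover have "(6 * p + 5) mod 3 = 2" using mod3[of p 5] by simp
    ultimately show ?thesis using 2 p unfolding v by (simp add: Q_arc_def)
  qed (use col mod3 in \<open>auto simp: v Q_dominator_def Q_arc_def mod_Suc\<close>)
qed

lemma dominated_coloring_Q:
  assumes "1 \<le> n"
  shows "dominated_coloring (S_V n) (Q_E n) Q_coloring (n + 1)"
proof (rule dominated_coloringI)
  fix v assume "v \<in> S_V n"
  then have v: "v \<le> 3 * n" by (simp add: S_V_def)
  then show "Q_coloring v < n + 1" using Q_coloring_le by fastforce
  show "Q_dominator n (Q_coloring v) \<in> S_V n \<and> adj (Q_E n) (Q_dominator n (Q_coloring v)) v"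
    using v Q_dominator_arc[OF assms v] by (simp add: S_V_def adj_Q_E)
next
  fix u v assume "adj (Q_E n) u v"
  then show "Q_coloring u \<noteq> Q_coloring v" using Q_coloring_proper unfolding adj_Q_E by metis
qed

lemma chi_dom_Q:
  assumes "1 \<le> n"
  shows "chi_dom (S_V n) (Q_E n) = n + 1"
proof (rule chi_dom_eqI[where f = Q_weight and b = 4])
  show "dominated_coloring (S_V n) (Q_E n) Q_coloring (n + 1)" using assms by (rule dominated_coloring_Q)
  show "finite (S_V n)" by (simp add: S_V_def)
  show "n * 4 < sum Q_weight (S_V n)" using sum_Q_weight by simp
  fix w S assume "S \<subseteq> {v \<in> S_V n. adj (Q_E n) w v}"
  then have "sum Q_weight S \<le> sum Q_weight {v \<in> S_V n. adj (Q_E n) w v}"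
    by (intro sum_mono2) (auto simp: S_V_def)
  then show "sum Q_weight S \<le> 4" using Q_nbhd_weight_le order_trans by blast
qed

theorem mainTheorem7:
  shows "(\<forall>n::nat. n \<ge> 3 \<longrightarrow> chi_dom (T_V n) (T_E n) = n + 1) \<and>
         (\<forall>n::nat. n \<ge> 2 \<longrightarrow> chi_dom (S_V n) (O_E n) = n + 1 \<and> chi_dom (S_V n) (Q_E n) = n + 1)"
proof (intro conjI allI impI)
  fix n :: nat
  assume "n \<ge> 3"
  then show "chi_dom (T_V n) (T_E n) = n + 1" by (intro chi_dom_T) simp
next
  fix n :: nat
  assume "n \<ge> 2"
  then show "chi_dom (S_V n) (O_E n) = n + 1" by (intro chi_dom_O) simp
  from \<open>n \<ge> 2\<close> show "chi_dom (S_V n) (Q_E n) = n + 1" by (intro chi_dom_Q) simp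
qed

end
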